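(* Let $\zeta_5$ be a primitive $5$-th root of unity. (1) $\left\{J_{\frac rs}(\zeta_5) : \tfrac rs>1\right\}=\{0,\ c,\ (\zeta_5-1)c,\ (\zeta_5^2+1)c : c=\pm\zeta_5^j,\ j=0,1,\dots,4\}$. (2) For an irreducible fraction $\frac rs>1$, $J_{\frac rs}(\zeta_5)=0$ if and only if $r\in 5\mathbb{Z}$ and $s\equiv 2$ or $3\pmod 5$.
   Context: Let $q$ be a formal parameter, $R_q=\begin{pmatrix} q & 1\\ 0 & 1\end{pmatrix}$, $S_q=\begin{pmatrix} 0 & -q^{-1}\\ 1 & 0\end{pmatrix}$, and for integers $c_1,\dots,c_k$ put $M_q(c_1,\dots,c_k)=R_q^{c_1}S_q\cdots R_q^{c_k}S_q$. Every irreducible fraction $\frac{r}{s}>1$ has a unique negative continued fraction expansion $\frac{r}{s}=c_1-\cfrac{1}{c_2-\cfrac{1}{\ddots-\cfrac{1}{c_k}}}$ with all $c_i\ge 2$; define $\mathcal{R}_{\frac rs}(q),\mathcal{S}_{\frac rs}(q)$ by $M_q(c_1,\dots,c_k)=\begin{pmatrix}\mathcal{R}_{\frac rs}(q) & *\\ \mathcal{S}_{\frac rs}(q) & *\end{pmatrix}$. Define $J_{\frac rs}(q)=q\,\mathcal{R}_{\frac rs}(q)+(1-q)\,\mathcal{S}_{\frac rs}(q)$; this is the normalized Jones polynomial of the rational (2-bridge) link $L(\frac rs)$, i.e. $\pm t^{-h}V_{L(r/s)}(t)|_{t=-q^{-1}}$ where $V$ is the Jones polynomial and $\pm t^h$ its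 leading term. *)

theory Defs
  imports "HOL-Analysis.Analysis"
begin

text \<open>2x2 complex matrices as complex^2^2. The formal parameter q is specialised to a
nonzero complex number (evaluation commutes with the matrix products).\<close>

definition Rq :: "complex \<Rightarrow> complex^2^2" where
  "Rq q = vector [vector [q, 1], vector [0, 1]]"

definition Sq :: "complex \<Rightarrow> complex^2^2" where
  "Sq q = vector [vector [0, - inverse q], vector [1, 0]]"

definition mpow :: "complex^2^2 \<Rightarrow> nat \<Rightarrow> complex^2^2" where
  "mpow A n = ((\<lambda>B. A ** B) ^^ n) (mat 1)"

text \<open>M_q(c_1,...,c_k) = R^{c_1} S ... R^{c_k} S (all c_i \<ge> 2 in our use, so nat powers).\<close>
definition Mq :: "complex \<Rightarrow> int list \<Rightarrow> complex^2^2" where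
  "Mq q cs = foldr (\<lambda>c A. mpow (Rq q) (nat c) ** Sq q ** A) cs (mat 1)"

fun ncf_val :: "int list \<Rightarrow> rat" where
  "ncf_val [] = 0"
| "ncf_val [c] = of_int c"
| "ncf_val (c # d # cs) = of_int c - 1 / ncf_val (d # cs)"

definition ncf :: "rat \<Rightarrow> int list" where
  "ncf x = (THE cs. cs \<noteq> [] \<and> (\<forall>c\<in>set cs. c \<ge> 2) \<and> ncf_val cs = x)"

definition calR :: "rat \<Rightarrow> complex \<Rightarrow> complex" where
  "calR x q = Mq q (ncf x) $ 1 $ 1"

definition calS :: "rat \<Rightarrow> complex \<Rightarrow> complex" where
  "calS x q = Mq q (ncf x) $ 2 $ 1"

definition Jones :: "rat \<Rightarrow> complex \<Rightarrow> complex" where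
  "Jones x q = q * calR x q + (1 - q) * calS x q"

end

theory Submission
  imports Defs
begin

(* At a fifth root of unity \<zeta> the first column (R, S) of M_\<zeta>(c_1, ..., c_k) lies in Z[\<zeta>]^2,
   and each factor R^c S acts on it through c mod 5 only. Hence every first column lies in the orbit
   of (1, 0) under five linear maps of Z[\<zeta>]^2. This orbit is finite (120 columns); it is computed
   and certified by evaluation, together with the Jones value \<zeta> R + (1 - \<zeta>) S of each element,
   and each value is attained by an explicit continued fraction. For the vanishing criterion,
   reduce modulo the prime 1 - \<zeta> above 5: this specialises q to 1 in the field with 5 elements,
   where the first column becomes (r, s) mod 5. *)

fun q_continuant :: "'a::comm_ring_1 \<Rightarrow> int list \<Rightarrow> 'a \<times> 'a" where
  "q_continuant q [] = (1, 0)"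
| "q_continuant q (c # cs) =
     ((\<Sum>i<nat c. q ^ i) * fst (q_continuant q cs) - q ^ (nat c - 1) * snd (q_continuant q cs),
      fst (q_continuant q cs))"

lemma mpow_Rq: "mpow (Rq q) n = vector [vector [q ^ n, \<Sum>i<n. q ^ i], vector [0, 1]]"
proof (induction n)
  case 0
  show ?case by (simp add: mpow_def mat_def vec_eq_iff forall_2)
next
  case (Suc n)
  have "mpow (Rq q) (Suc n) = Rq q ** vector [vector [q ^ n, \<Sum>i<n. q ^ i], vector [0, 1]]"
    using Suc by (simp add: mpow_def)
  moreover have "(\<Sum>i<Suc n. q ^ i) = q * (\<Sum>i<n. q ^ i) + 1"
    by (simp only: sum.lessThan_Suc_shift power_0 power_Suc sum_distrib_left add.commute)
  ultimately show ?case
    by (simp add: Rq_def matrix_matrix_mult_def sum_2 vec_eq_iff forall_2)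
qed

lemma Mq_first_column:
  assumes "q \<noteq> 0" and "\<forall>c\<in>set cs. c \<ge> 1"
  shows "(Mq q cs $ 1 $ 1, Mq q cs $ 2 $ 1) = q_continuant q cs"
  using assms(2)
proof (induction cs)
  case Nil
  show ?case by (simp add: Mq_def mat_def)
next
  case (Cons c cs)
  have "nat c = Suc (nat c - 1)"
    using Cons.prems by simp
  then have "q ^ nat c * inverse q = q ^ (nat c - 1)"
    using \<open>q \<noteq> 0\<close> by (metis power_Suc nonzero_mult_div_cancel_left divide_inverse)
  then have "mpow (Rq q) (nat c) ** Sq q =
      vector [vector [(\<Sum>i<nat c. q ^ i), - (q ^ (nat c - 1))], vector [1, 0]]"
    by (simp add: mpow_Rq Sq_def matrix_matrix_mult_def sum_2 vec_eq_iff forall_2)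
  then have "Mq q (c # cs) =
      vector [vector [(\<Sum>i<nat c. q ^ i), - (q ^ (nat c - 1))], vector [1, 0]] ** Mq q cs"
    by (simp add: Mq_def)
  then show ?case
    using Cons by (auto simp: matrix_matrix_mult_def sum_2 prod_eq_iff)
qed

lemma q_continuant_of_int: "q_continuant (of_int q) cs = map_prod of_int of_int (q_continuant q cs)"
  by (induction cs) simp_all

section \<open>Negative continued fractions\<close>

definition ncf_admissible :: "int list \<Rightarrow> bool" where
  "ncf_admissible cs \<longleftrightarrow> cs \<noteq> [] \<and> (\<forall>c\<in>set cs. c \<ge> 2)"

lemma ncf_admissible_Cons: "cs \<noteq> [] \<Longrightarrow> ncf_admissible (c # cs) \<longleftrightarrow> c \<ge> 2 \<and> ncf_admissible cs"
  by (auto simp: ncf_admissible_def)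

lemma ncf_val_Cons: "cs \<noteq> [] \<Longrightarrow> ncf_val (c # cs) = of_int c - 1 / ncf_val cs"
  by (cases cs) auto

lemma ncf_val_q_continuant_1:
  assumes "ncf_admissible cs" and "q_continuant 1 cs = (r, s)"
  shows "0 < s \<and> s < r \<and> coprime r s \<and> ncf_val cs = of_int r / of_int s"
  using assms
proof (induction cs arbitrary: r s)
  case Nil
  then show ?case by (simp add: ncf_admissible_def)
next
  case (Cons c cs)
  show ?case
  proof (cases "cs = []")
    case True
    then show ?thesis using Cons.prems by (auto simp: ncf_admissible_def)
  next
    case False
    obtain r' s' where rs': "q_continuant (1::int) cs = (r', s')"
      by force
    have c: "c \<ge> 2" and "ncf_admissible cs"
      using Cons.prems(1) False by (simp_all add: ncf_admissible_Cons)
    then have IH: "0 < s'" "s' < r'" "coprime r' s'" "ncf_val cs = of_int r' / of_int s'"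
      using Cons.IH rs' by auto
    have rs: "r = c * r' - s'" "s = r'"
      using Cons.prems(2) rs' c by auto
    have "2 * r' \<le> c * r'"
      using c IH by simp
    then have "r' < c * r' - s'"
      using IH by linarith
    moreover have "coprime (c * r' - s') r'"
    proof -
      have "gcd r' (c * r' + - s') = gcd r' (- s')"
        by (rule gcd_add_mult)
      then show ?thesis
        using IH(3) by (simp add: coprime_iff_gcd_eq_1 gcd.commute)
    qed
    moreover have "ncf_val (c # cs) = of_int (c * r' - s') / of_int r'"
      using IH(1,2) False by (simp add: ncf_val_Cons IH(4) field_simps)
    ultimately show ?thesis
      using IH rs by auto
  qed
qed

lemma ncf_val_gt_1:
  assumes "ncf_admissible cs"
  shows "ncf_val cs > 1"
proof -
  obtain r s where "q_continuant (1::int) cs = (r, s)"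
    by force
  then show ?thesis
    using ncf_val_q_continuant_1[OF assms] by simp
qed

lemma ncf_val_bounds:
  assumes "ncf_admissible (c # cs)" and "cs \<noteq> []"
  shows "of_int c - 1 < ncf_val (c # cs)" and "ncf_val (c # cs) < of_int c"
proof -
  have "ncf_val cs > 1"
    using assms by (simp add: ncf_admissible_Cons ncf_val_gt_1)
  then show "of_int c - 1 < ncf_val (c # cs)" and "ncf_val (c # cs) < of_int c"
    using assms(2) by (simp_all add: ncf_val_Cons)
qed

lemma ceiling_ncf_val:
  assumes "ncf_admissible (c # cs)"
  shows "\<lceil>ncf_val (c # cs)\<rceil> = c"
proof (cases "cs = []")
  case False
  then show ?thesis
    using ncf_val_bounds[OF assms False] by (intro ceiling_unique) auto
qed simp

lemma ncf_val_inject: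
  "ncf_admissible cs \<Longrightarrow> ncf_admissible ds \<Longrightarrow> ncf_val cs = ncf_val ds \<Longrightarrow> cs = ds"
proof (induction cs arbitrary: ds)
  case Nil
  then show ?case by (simp add: ncf_admissible_def)
next
  case (Cons c cs)
  obtain d ds' where ds: "ds = d # ds'"
    using Cons.prems(2) by (cases ds) (auto simp: ncf_admissible_def)
  have "c = d"
    using ceiling_ncf_val[OF Cons.prems(1)] ceiling_ncf_val[of d ds'] Cons.prems(2,3) ds
    by simp
  consider "cs = []" "ds' = []" | "cs \<noteq> []" "ds' \<noteq> []" | "cs = [] \<longleftrightarrow> ds' \<noteq> []"
    by blast
  then show ?case
  proof cases
    case 1
    then show ?thesis using \<open>c = d\<close> ds by simp
  next
    case 2
    then have "ncf_val cs = ncf_val ds'"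
      using Cons.prems(3) ds \<open>c = d\<close> by (simp add: ncf_val_Cons)
    then show ?thesis
      using Cons.IH Cons.prems(1,2) 2 ds \<open>c = d\<close> by (simp add: ncf_admissible_Cons)
  next
    case 3
    then show ?thesis
      using ncf_val_bounds(2)[of c cs] ncf_val_bounds(2)[of d ds'] Cons.prems ds \<open>c = d\<close> by auto
  qed
qed

lemma ncf_val_surj:
  "0 < s \<Longrightarrow> s < r \<Longrightarrow> \<exists>cs. ncf_admissible cs \<and> ncf_val cs = of_int r / of_int s"
proof (induction "nat s" arbitrary: r s rule: less_induct)
  case less
  show ?case
  proof (cases "s dvd r")
    case True
    then obtain k where "r = s * k"
      by blast
    with less.prems have "k \<ge> 2" and "of_int r / of_int s = (of_int k :: rat)"
      by (auto simp: mult_less_cancel_left_pos)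
    then show ?thesis
      by (intro exI[of _ "[k]"]) (simp add: ncf_admissible_def)
  next
    case False
    define c where "c = r div s + 1"
    define s' where "s' = c * s - r"
    have "s' = s - r mod s"
      by (simp add: s'_def c_def algebra_simps minus_mod_eq_mult_div)
    moreover have "0 < r mod s"
      using False less.prems(1) by (simp add: dvd_eq_mod_eq_0 order_less_le)
    ultimately have "0 < s'" and "s' < s"
      using less.prems(1) by auto
    then obtain cs where cs: "ncf_admissible cs" "ncf_val cs = of_int s / of_int s'"
      using less.hyps[of s'] by auto
    have "c \<ge> 2"
      using less.prems pos_imp_zdiv_pos_iff[of s r] by (simp add: c_def)
    moreover have "ncf_val (c # cs) = of_int r / of_int s"
      using cs less.prems(1) \<open>0 < s'\<close>
      by (auto simp: ncf_val_Cons ncf_admissible_def s'_def field_simps)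
    ultimately show ?thesis
      using cs by (intro exI[of _ "c # cs"]) (auto simp: ncf_admissible_def)
  qed
qed

lemma ncf_correct:
  assumes "x > 1"
  shows "ncf_admissible (ncf x)" and "ncf_val (ncf x) = x"
proof -
  obtain r s where "x = of_int r / of_int s" and "0 < s"
    by (cases x) (auto simp: Fract_of_int_quotient)
  with assms have "s < r"
    by (simp add: less_divide_eq)
  then have "\<exists>!cs. ncf_admissible cs \<and> ncf_val cs = x"
    using ncf_val_surj ncf_val_inject \<open>0 < s\<close> \<open>x = _\<close> by metis
  then show "ncf_admissible (ncf x)" and "ncf_val (ncf x) = x"
    using theI'[of "\<lambda>cs. ncf_admissible cs \<and> ncf_val cs = x"]
    by (simp_all add: ncf_def ncf_admissible_def)
qed

lemma ncf_ncf_val: "ncf_admissible cs \<Longrightarrow> ncf (ncf_val cs) = cs"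
  using ncf_correct[of "ncf_val cs"] ncf_val_gt_1 ncf_val_inject by blast

lemma q_continuant_1_ncf_Fract:
  assumes "0 < s" "s < r" "coprime r s"
  shows "q_continuant 1 (ncf (Fract r s)) = (r, s)"
proof -
  have "Fract r s > 1"
    using assms by (simp add: Fract_of_int_quotient)
  then have adm: "ncf_admissible (ncf (Fract r s))" and val: "ncf_val (ncf (Fract r s)) = Fract r s"
    by (rule ncf_correct)+
  obtain r' s' where rs': "q_continuant (1::int) (ncf (Fract r s)) = (r', s')"
    by force
  then have "0 < s'" "coprime r' s'" "Fract r' s' = Fract r s"
    using ncf_val_q_continuant_1[OF adm rs'] val by (simp_all add: Fract_of_int_quotient)
  then have "quotient_of (Fract r' s') = quotient_of (Fract r s)"
    by simp
  then show ?thesis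
    using rs' assms \<open>0 < s'\<close> \<open>coprime r' s'\<close> by (simp add: quotient_of_Fract)
qed

section \<open>Cyclotomic integers of order 5\<close>

(* Cyc5 a0 a1 a2 a3 stands for a0 + a1 \<zeta> + a2 \<zeta>^2 + a3 \<zeta>^3, with products reduced by
   \<zeta>^4 = -1 - \<zeta> - \<zeta>^2 - \<zeta>^3. The instance provides the operations only, not the ring
   axioms: cyc5 is a device for computation, and it is given meaning by cyc5_eval at a root of
   1 + z + z^2 + z^3 + z^4. *)
datatype cyc5 = Cyc5 int int int int

instantiation cyc5 :: "{zero, one, plus, uminus, minus, times, power}"
begin

definition zero_cyc5 :: cyc5 where
  "0 = Cyc5 0 0 0 0"

definition one_cyc5 :: cyc5 where
  "1 = Cyc5 1 0 0 0"

fun plus_cyc5 :: "cyc5 \<Rightarrow> cyc5 \<Rightarrow> cyc5" where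
  "Cyc5 a0 a1 a2 a3 + Cyc5 b0 b1 b2 b3 = Cyc5 (a0 + b0) (a1 + b1) (a2 + b2) (a3 + b3)"

fun uminus_cyc5 :: "cyc5 \<Rightarrow> cyc5" where
  "- Cyc5 a0 a1 a2 a3 = Cyc5 (- a0) (- a1) (- a2) (- a3)"

definition minus_cyc5 :: "cyc5 \<Rightarrow> cyc5 \<Rightarrow> cyc5" where
  "a - b = a + - (b :: cyc5)"

fun times_cyc5 :: "cyc5 \<Rightarrow> cyc5 \<Rightarrow> cyc5" where
  "Cyc5 a0 a1 a2 a3 * Cyc5 b0 b1 b2 b3 =
    (let e4 = a1 * b3 + a2 * b2 + a3 * b1 in
     Cyc5 (a0 * b0 + a2 * b3 + a3 * b2 - e4) (a0 * b1 + a1 * b0 + a3 * b3 - e4)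
          (a0 * b2 + a1 * b1 + a2 * b0 - e4) (a0 * b3 + a1 * b2 + a2 * b1 + a3 * b0 - e4))"

instance ..

end

definition cyc5_zeta :: cyc5 where
  "cyc5_zeta = Cyc5 0 1 0 0"

fun cyc5_eval :: "'a::comm_ring_1 \<Rightarrow> cyc5 \<Rightarrow> 'a" where
  "cyc5_eval z (Cyc5 a0 a1 a2 a3) = of_int a0 + of_int a1 * z + of_int a2 * z ^ 2 + of_int a3 * z ^ 3"

fun cyc5_aug :: "cyc5 \<Rightarrow> int" where
  "cyc5_aug (Cyc5 a0 a1 a2 a3) = a0 + a1 + a2 + a3"

lemma cyc5_eval_0 [simp]: "cyc5_eval z 0 = 0"
  and cyc5_eval_1 [simp]: "cyc5_eval z 1 = 1"
  and cyc5_eval_zeta [simp]: "cyc5_eval z cyc5_zeta = z"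
  by (simp_all add: zero_cyc5_def one_cyc5_def cyc5_zeta_def)

lemma cyc5_eval_add [simp]: "cyc5_eval z (a + b) = cyc5_eval z a + cyc5_eval z b"
  by (cases a; cases b) (simp add: algebra_simps)

lemma cyc5_eval_uminus [simp]: "cyc5_eval z (- a) = - cyc5_eval z a"
  by (cases a) (simp add: algebra_simps)

lemma cyc5_eval_diff [simp]: "cyc5_eval z (a - b) = cyc5_eval z a - cyc5_eval z b"
  by (simp add: minus_cyc5_def)

lemma cyc5_eval_at_1: "cyc5_eval 1 a = of_int (cyc5_aug a)"
  by (cases a) simp

locale cyclotomic5_root =
  fixes z :: "'a::comm_ring_1"
  assumes cyclotomic: "1 + z + z ^ 2 + z ^ 3 + z ^ 4 = 0"
begin

lemma power_5: "z ^ 5 = 1"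
proof -
  have "z ^ 5 - 1 = (z - 1) * (1 + z + z ^ 2 + z ^ 3 + z ^ 4)"
    by (simp add: algebra_simps eval_nat_numeral)
  then show ?thesis
    by (simp add: cyclotomic)
qed

lemma power_mod_5: "z ^ (n mod 5) = z ^ n"
  by (metis div_mult_mod_eq mult.commute power_5 power_add power_mult power_one mult_1)

lemma geometric_sum_mod_5: "(\<Sum>i<n mod 5. z ^ i) = (\<Sum>i<n. z ^ i)"
proof -
  have period: "(\<Sum>i<m + 5. z ^ i) = (\<Sum>i<m. z ^ i)" for m
  proof -
    have "(\<Sum>i<m + 5. z ^ i) = (\<Sum>i<m. z ^ i) + z ^ m * (1 + z + z ^ 2 + z ^ 3 + z ^ 4)"
      by (simp add: eval_nat_numeral algebra_simps)
    then show ?thesis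
      by (simp add: cyclotomic)
  qed
  have "(\<Sum>i<n mod 5 + 5 * k. z ^ i) = (\<Sum>i<n mod 5. z ^ i)" for k
  proof (induction k)
    case (Suc k)
    have "n mod 5 + 5 * Suc k = (n mod 5 + 5 * k) + 5"
      by simp
    then show ?case
      by (simp only: period Suc.IH)
  qed simp
  from this[of "n div 5"] show ?thesis
    by simp
qed

lemma cyc5_eval_mult [simp]: "cyc5_eval z (a * b) = cyc5_eval z a * cyc5_eval z b"
proof (cases a; cases b)
  fix a0 a1 a2 a3 b0 b1 b2 b3
  assume a: "a = Cyc5 a0 a1 a2 a3" and b: "b = Cyc5 b0 b1 b2 b3"
  have "cyc5_eval z a * cyc5_eval z b - cyc5_eval z (a * b) =
     (of_int (a3 * b3) * z ^ 2 + of_int (a2 * b3 + a3 * b2 - a3 * b3) * z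
      + of_int (a1 * b3 + a2 * b2 + a3 * b1 - a2 * b3 - a3 * b2)) * (1 + z + z ^ 2 + z ^ 3 + z ^ 4)"
    unfolding a b by (simp add: Let_def algebra_simps eval_nat_numeral)
  then show ?thesis
    by (simp add: cyclotomic)
qed

lemma cyc5_eval_power [simp]: "cyc5_eval z (a ^ n) = cyc5_eval z a ^ n"
  by (induction n) simp_all

end

lemma cyclotomic5_rootI:
  fixes z :: "'a::idom"
  assumes "z ^ 5 = 1" and "z \<noteq> 1"
  shows "cyclotomic5_root z"
proof
  have "(z - 1) * (1 + z + z ^ 2 + z ^ 3 + z ^ 4) = z ^ 5 - 1"
    by (simp add: algebra_simps eval_nat_numeral)
  then show "1 + z + z ^ 2 + z ^ 3 + z ^ 4 = 0"
    using assms by simp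
qed

definition cyc5_geom :: "nat \<Rightarrow> cyc5" where
  "cyc5_geom k =
     [0, 1, 1 + cyc5_zeta, 1 + cyc5_zeta + cyc5_zeta ^ 2,
      1 + cyc5_zeta + cyc5_zeta ^ 2 + cyc5_zeta ^ 3] ! (k mod 5)"

(* The exponent (k + 4) mod 5 stands for k - 1: it is the factor q^k q^-1 of R_q^k S_q, written so
   that the step depends on k mod 5 only. *)
definition cyc5_step :: "nat \<Rightarrow> cyc5 \<times> cyc5 \<Rightarrow> cyc5 \<times> cyc5" where
  "cyc5_step k v = (cyc5_geom k * fst v - cyc5_zeta ^ ((k + 4) mod 5) * snd v, fst v)"

fun cyc5_col :: "int list \<Rightarrow> cyc5 \<times> cyc5" where
  "cyc5_col [] = (1, 0)"
| "cyc5_col (c # cs) = cyc5_step (nat c) (cyc5_col cs)"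

context cyclotomic5_root
begin

lemma cyc5_eval_geom: "cyc5_eval z (cyc5_geom k) = (\<Sum>i<k. z ^ i)"
proof -
  have "(\<Sum>i<2. z ^ i) = 1 + z" "(\<Sum>i<3. z ^ i) = 1 + z + z ^ 2"
    "(\<Sum>i<4. z ^ i) = 1 + z + z ^ 2 + z ^ 3"
    by (simp_all add: numeral_eq_Suc)
  moreover have "k mod 5 = 0 \<or> k mod 5 = 1 \<or> k mod 5 = 2 \<or> k mod 5 = 3 \<or> k mod 5 = 4"
    by linarith
  ultimately have "cyc5_eval z (cyc5_geom k) = (\<Sum>i<k mod 5. z ^ i)"
    unfolding cyc5_geom_def by auto
  then show ?thesis
    by (simp add: geometric_sum_mod_5)
qed

lemma cyc5_eval_step:
  assumes "k \<ge> 1"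
  shows "map_prod (cyc5_eval z) (cyc5_eval z) (cyc5_step k v) =
    ((\<Sum>i<k. z ^ i) * cyc5_eval z (fst v) - z ^ (k - 1) * cyc5_eval z (snd v), cyc5_eval z (fst v))"
proof -
  have "k + 4 = k - 1 + 5"
    using assms by simp
  then have "z ^ ((k + 4) mod 5) = z ^ (k - 1)"
    by (simp only: power_mod_5 power_add power_5 mult_1_right)
  then show ?thesis
    by (simp add: cyc5_step_def cyc5_eval_geom)
qed

lemma cyc5_eval_col:
  "\<forall>c\<in>set cs. c \<ge> 1 \<Longrightarrow> map_prod (cyc5_eval z) (cyc5_eval z) (cyc5_col cs) = q_continuant z cs"
proof (induction cs)
  case (Cons c cs)
  then have "nat c \<ge> 1"
    by (simp add: Suc_le_eq)
  then show ?case
    using Cons cyc5_eval_step[of "nat c" "cyc5_col cs"] by (simp add: prod_eq_iff)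
qed simp

end

lemma of_int_eq_iff_mod_5: "(of_int a :: 5) = of_int b \<longleftrightarrow> a mod 5 = b mod 5"
proof -
  have "(of_int a :: 5) = of_int b \<longleftrightarrow> (of_int (a - b) :: 5) = 0"
    by simp
  also have "\<dots> \<longleftrightarrow> int CHAR(5) dvd a - b"
    by (rule of_int_eq_0_iff_char_dvd)
  finally show ?thesis
    by (simp add: mod_eq_dvd_iff)
qed

lemma cyc5_aug_col_mod_5:
  assumes "\<forall>c\<in>set cs. c \<ge> 1"
  shows "cyc5_aug (fst (cyc5_col cs)) mod 5 = fst (q_continuant 1 cs) mod 5"
    and "cyc5_aug (snd (cyc5_col cs)) mod 5 = snd (q_continuant 1 cs) mod 5"
proof -
  \<comment> \<open>Evaluation at 1 in the field with 5 elements is reduction modulo the prime 1 - \<zeta> above 5.\<close>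
  interpret F5: cyclotomic5_root "1 :: 5"
    by unfold_locales simp
  have "map_prod (cyc5_eval 1) (cyc5_eval 1) (cyc5_col cs) =
      (map_prod of_int of_int (q_continuant 1 cs) :: 5 \<times> 5)"
    using F5.cyc5_eval_col[OF assms] q_continuant_of_int[of 1 cs] by simp
  then show "cyc5_aug (fst (cyc5_col cs)) mod 5 = fst (q_continuant 1 cs) mod 5"
    and "cyc5_aug (snd (cyc5_col cs)) mod 5 = snd (q_continuant 1 cs) mod 5"
    by (simp_all add: cyc5_eval_at_1 prod_eq_iff of_int_eq_iff_mod_5)
qed

section \<open>The finite orbit of first columns\<close>

definition cyc5_jones :: "cyc5 \<times> cyc5 \<Rightarrow> cyc5" where
  "cyc5_jones v = cyc5_zeta * fst v + (1 - cyc5_zeta) * snd v"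

definition jones_values :: "cyc5 list" where
  "jones_values =
     [m * s * cyc5_zeta ^ j. m \<leftarrow> [1, cyc5_zeta - 1, cyc5_zeta ^ 2 + 1], s \<leftarrow> [1, - 1], j \<leftarrow> [0..<5]]"

lemma mem_jones_values:
  "x \<in> set jones_values \<longleftrightarrow>
     (\<exists>m\<in>{1, cyc5_zeta - 1, cyc5_zeta ^ 2 + 1}. \<exists>s\<in>{1, - 1}. \<exists>j<5. x = m * s * cyc5_zeta ^ j)"
  by (auto simp: jones_values_def)

lemma (in cyclotomic5_root) cyc5_eval_jones_values:
  "cyc5_eval z ` set jones_values =
     {d. \<exists>c. (\<exists>j::nat. j < 5 \<and> (c = z ^ j \<or> c = - (z ^ j))) \<and>
             (d = c \<or> d = (z - 1) * c \<or> d = (z\<^sup>2 + 1) * c)}"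
  (is "_ = ?T")
proof (intro equalityI subsetI)
  fix d
  assume "d \<in> cyc5_eval z ` set jones_values"
  then obtain x where "x \<in> set jones_values" and d: "d = cyc5_eval z x"
    by blast
  then obtain m s j where m: "m \<in> {1, cyc5_zeta - 1, cyc5_zeta ^ 2 + 1}" and s: "s \<in> {1, - 1}"
    and j: "j < 5" and x: "x = m * s * cyc5_zeta ^ j"
    unfolding mem_jones_values by blast
  define c where "c = cyc5_eval z s * z ^ j"
  have "c = z ^ j \<or> c = - (z ^ j)"
    using s by (auto simp: c_def)
  moreover have "d = c \<or> d = (z - 1) * c \<or> d = (z\<^sup>2 + 1) * c"
    using m by (auto simp: d x c_def mult.assoc)
  ultimately show "d \<in> ?T"
    using j by blast
next
  fix d
  assume "d \<in> ?T"
  then obtain j c where j: "j < 5" and c: "c = z ^ j \<or> c = - (z ^ j)"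
    and d: "d = c \<or> d = (z - 1) * c \<or> d = (z\<^sup>2 + 1) * c"
    by blast
  have "\<exists>s\<in>{1, - 1}. c = cyc5_eval z (s * cyc5_zeta ^ j)"
    using c by auto
  then obtain s where s: "s \<in> {1, - 1}" "c = cyc5_eval z (s * cyc5_zeta ^ j)" ..
  have "\<exists>m\<in>{1, cyc5_zeta - 1, cyc5_zeta ^ 2 + 1}. d = cyc5_eval z m * c"
    using d by auto
  then obtain m where m: "m \<in> {1, cyc5_zeta - 1, cyc5_zeta ^ 2 + 1}" "d = cyc5_eval z m * c" ..
  have "m * s * cyc5_zeta ^ j \<in> set jones_values"
    using mem_jones_values m(1) s(1) j by blast
  moreover have "d = cyc5_eval z (m * s * cyc5_zeta ^ j)"
    using m(2) s(2) by (simp add: mult.assoc)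
  ultimately show "d \<in> cyc5_eval z ` set jones_values"
    by blast
qed

lemma zero_notin_cyc5_eval_jones_values:
  fixes z :: "'a::{idom, ring_char_0}"
  assumes "cyclotomic5_root z"
  shows "0 \<notin> cyc5_eval z ` set jones_values"
proof -
  interpret cyclotomic5_root z
    by (fact assms)
  have "z \<noteq> 1"
    using cyclotomic by auto
  have "z \<noteq> 0"
    using power_5 by auto
  have "z\<^sup>2 + 1 \<noteq> 0"
  proof
    assume "z\<^sup>2 + 1 = 0"
    then have "z\<^sup>2 = - 1"
      by (simp add: eq_neg_iff_add_eq_0)
    have "z ^ 4 = (z\<^sup>2)\<^sup>2"
      by (simp flip: power_mult)
    also have "\<dots> = 1"
      using \<open>z\<^sup>2 = - 1\<close> by simp
    finally have "z ^ 4 = 1" .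
    moreover have "z ^ 5 = z ^ 4 * z"
      by (simp add: eval_nat_numeral mult_ac)
    ultimately have "z = 1"
      using power_5 by simp
    with \<open>z \<noteq> 1\<close> show False ..
  qed
  then show ?thesis
    using \<open>z \<noteq> 1\<close> \<open>z \<noteq> 0\<close> by (auto simp: cyc5_eval_jones_values)
qed

definition jones_vanishing_residues :: "int \<times> int \<Rightarrow> bool" where
  "jones_vanishing_residues rs \<longleftrightarrow> fst rs mod 5 = 0 \<and> (snd rs mod 5 = 2 \<or> snd rs mod 5 = 3)"

definition jones_witnesses :: "int list list" where
  "jones_witnesses =
    [[3, 2], [6], [2, 4, 4], [3, 4, 4], [4, 3, 5], [4, 4, 5], [5, 5], [4], [2, 5], [3, 5],
     [4, 5], [5, 6, 5], [5, 2, 5], [5, 3, 5], [5, 4, 5], [4, 4], [5], [2, 6, 2], [3, 4, 3],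
     [4, 3, 4], [4, 4, 6, 5], [2], [2, 6, 4], [3, 4, 5], [2, 4], [2, 4, 2], [2, 6, 5], [3, 3],
     [2, 2], [2, 4, 5], [3]]"

(* The orbit of (1, 0) under the steps, listed explicitly (it was found by a breadth-first
   search); all that is used about the list is its closure, cyc5_orbit_closed. *)
definition cyc5_orbit :: "(cyc5 \<times> cyc5) list" where
  "cyc5_orbit =
    [(Cyc5 1 0 0 0, Cyc5 0 0 0 0), (Cyc5 0 0 0 0, Cyc5 1 0 0 0), (Cyc5 1 0 0 0, Cyc5 1 0 0 0),
     (Cyc5 1 1 0 0, Cyc5 1 0 0 0), (Cyc5 1 1 1 0, Cyc5 1 0 0 0), (Cyc5 1 1 1 1, Cyc5 1 0 0 0),
     (Cyc5 1 1 1 1, Cyc5 0 0 0 0), (Cyc5 (-1) 0 0 0, Cyc5 0 0 0 0), (Cyc5 0 (-1) 0 0, Cyc5 0 0 0 0),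
     (Cyc5 0 0 (-1) 0, Cyc5 0 0 0 0), (Cyc5 0 0 0 (-1), Cyc5 0 0 0 0), (Cyc5 1 1 1 1, Cyc5 1 1 0 0),
     (Cyc5 0 1 0 0, Cyc5 1 1 0 0), (Cyc5 1 1 1 0, Cyc5 1 1 0 0), (Cyc5 1 2 1 1, Cyc5 1 1 0 0),
     (Cyc5 0 1 1 0, Cyc5 1 1 0 0), (Cyc5 1 1 1 1, Cyc5 1 1 1 0), (Cyc5 0 1 1 0, Cyc5 1 1 1 0),
     (Cyc5 1 1 2 1, Cyc5 1 1 1 0), (Cyc5 0 1 1 1, Cyc5 1 1 1 0), (Cyc5 0 0 1 0, Cyc5 1 1 1 0),
     (Cyc5 1 1 1 1, Cyc5 1 1 1 1), (Cyc5 0 1 1 1, Cyc5 1 1 1 1), (Cyc5 0 0 1 1, Cyc5 1 1 1 1),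
     (Cyc5 0 0 0 1, Cyc5 1 1 1 1), (Cyc5 0 0 0 0, Cyc5 1 1 1 1), (Cyc5 0 0 0 0, Cyc5 (-1) 0 0 0),
     (Cyc5 (-1) 0 0 0, Cyc5 (-1) 0 0 0), (Cyc5 (-1) (-1) 0 0, Cyc5 (-1) 0 0 0), (Cyc5 (-1) (-1) (-1) 0, Cyc5 (-1) 0 0 0),
     (Cyc5 (-1) (-1) (-1) (-1), Cyc5 (-1) 0 0 0), (Cyc5 0 0 0 0, Cyc5 0 (-1) 0 0), (Cyc5 0 (-1) 0 0, Cyc5 0 (-1) 0 0),
     (Cyc5 0 (-1) (-1) 0, Cyc5 0 (-1) 0 0), (Cyc5 0 (-1) (-1) (-1), Cyc5 0 (-1) 0 0), (Cyc5 1 0 0 0, Cyc5 0 (-1) 0 0),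
     (Cyc5 0 0 0 0, Cyc5 0 0 (-1) 0), (Cyc5 0 0 (-1) 0, Cyc5 0 0 (-1) 0), (Cyc5 0 0 (-1) (-1), Cyc5 0 0 (-1) 0),
     (Cyc5 1 1 0 0, Cyc5 0 0 (-1) 0), (Cyc5 0 1 0 0, Cyc5 0 0 (-1) 0), (Cyc5 0 0 0 0, Cyc5 0 0 0 (-1)),
     (Cyc5 0 0 0 (-1), Cyc5 0 0 0 (-1)), (Cyc5 1 1 1 0, Cyc5 0 0 0 (-1)), (Cyc5 0 1 1 0, Cyc5 0 0 0 (-1)),
     (Cyc5 0 0 1 0, Cyc5 0 0 0 (-1)), (Cyc5 0 1 1 1, Cyc5 0 1 0 0), (Cyc5 (-1) 0 0 0, Cyc5 0 1 0 0),
     (Cyc5 0 0 0 0, Cyc5 0 1 0 0), (Cyc5 0 1 0 0, Cyc5 0 1 0 0), (Cyc5 0 1 1 0, Cyc5 0 1 0 0),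
     (Cyc5 0 1 1 1, Cyc5 1 2 1 1), (Cyc5 0 1 1 1, Cyc5 0 1 1 0), (Cyc5 (-1) 0 1 0, Cyc5 0 1 1 0),
     (Cyc5 0 0 1 1, Cyc5 0 1 1 0), (Cyc5 (-1) 0 0 0, Cyc5 0 1 1 0), (Cyc5 0 0 1 0, Cyc5 0 1 1 0),
     (Cyc5 0 0 1 1, Cyc5 1 1 2 1), (Cyc5 0 0 1 1, Cyc5 0 1 1 1), (Cyc5 (-1) 0 0 1, Cyc5 0 1 1 1),
     (Cyc5 (-1) (-1) 0 0, Cyc5 0 1 1 1), (Cyc5 0 0 0 1, Cyc5 0 1 1 1), (Cyc5 (-1) 0 0 0, Cyc5 0 1 1 1),
     (Cyc5 0 0 1 1, Cyc5 0 0 1 0), (Cyc5 (-1) (-1) 0 0, Cyc5 0 0 1 0), (Cyc5 0 (-1) 0 0, Cyc5 0 0 1 0),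
     (Cyc5 0 0 0 0, Cyc5 0 0 1 0), (Cyc5 0 0 1 0, Cyc5 0 0 1 0), (Cyc5 0 0 0 1, Cyc5 0 0 1 1),
     (Cyc5 (-1) (-1) 0 0, Cyc5 0 0 1 1), (Cyc5 0 (-1) 0 1, Cyc5 0 0 1 1), (Cyc5 (-1) (-1) (-1) 0, Cyc5 0 0 1 1),
     (Cyc5 0 (-1) 0 0, Cyc5 0 0 1 1), (Cyc5 0 0 0 1, Cyc5 0 0 0 1), (Cyc5 (-1) (-1) (-1) 0, Cyc5 0 0 0 1),
     (Cyc5 0 (-1) (-1) 0, Cyc5 0 0 0 1), (Cyc5 0 0 (-1) 0, Cyc5 0 0 0 1), (Cyc5 0 0 0 0, Cyc5 0 0 0 1),
     (Cyc5 0 0 0 1, Cyc5 0 0 0 0), (Cyc5 (-1) (-1) (-1) (-1), Cyc5 0 0 0 0), (Cyc5 0 1 0 0, Cyc5 0 0 0 0),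
     (Cyc5 0 0 1 0, Cyc5 0 0 0 0), (Cyc5 (-1) (-1) (-1) (-1), Cyc5 (-1) (-1) 0 0), (Cyc5 0 (-1) 0 0, Cyc5 (-1) (-1) 0 0),
     (Cyc5 (-1) (-1) (-1) 0, Cyc5 (-1) (-1) 0 0), (Cyc5 (-1) (-2) (-1) (-1), Cyc5 (-1) (-1) 0 0), (Cyc5 0 (-1) (-1) 0, Cyc5 (-1) (-1) 0 0),
     (Cyc5 (-1) (-1) (-1) (-1), Cyc5 (-1) (-1) (-1) 0), (Cyc5 0 (-1) (-1) 0, Cyc5 (-1) (-1) (-1) 0), (Cyc5 (-1) (-1) (-2) (-1), Cyc5 (-1) (-1) (-1) 0),
     (Cyc5 0 (-1) (-1) (-1), Cyc5 (-1) (-1) (-1) 0), (Cyc5 0 0 (-1) 0, Cyc5 (-1) (-1) (-1) 0), (Cyc5 (-1) (-1) (-1) (-1), Cyc5 (-1) (-1) (-1) (-1)),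
     (Cyc5 0 (-1) (-1) (-1), Cyc5 (-1) (-1) (-1) (-1)), (Cyc5 0 0 (-1) (-1), Cyc5 (-1) (-1) (-1) (-1)), (Cyc5 0 0 0 (-1), Cyc5 (-1) (-1) (-1) (-1)),
     (Cyc5 0 0 0 0, Cyc5 (-1) (-1) (-1) (-1)), (Cyc5 1 0 0 0, Cyc5 0 (-1) (-1) 0), (Cyc5 0 0 (-1) 0, Cyc5 0 (-1) (-1) 0),
     (Cyc5 0 (-1) (-1) (-1), Cyc5 0 (-1) (-1) 0), (Cyc5 1 0 (-1) 0, Cyc5 0 (-1) (-1) 0), (Cyc5 0 0 (-1) (-1), Cyc5 0 (-1) (-1) 0),
     (Cyc5 1 0 0 0, Cyc5 0 (-1) (-1) (-1)), (Cyc5 0 0 (-1) (-1), Cyc5 0 (-1) (-1) (-1)), (Cyc5 1 0 0 (-1), Cyc5 0 (-1) (-1) (-1)),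
     (Cyc5 1 1 0 0, Cyc5 0 (-1) (-1) (-1)), (Cyc5 0 0 0 (-1), Cyc5 0 (-1) (-1) (-1)), (Cyc5 0 1 0 0, Cyc5 0 0 (-1) (-1)),
     (Cyc5 0 0 0 (-1), Cyc5 0 0 (-1) (-1)), (Cyc5 1 1 0 0, Cyc5 0 0 (-1) (-1)), (Cyc5 0 1 0 (-1), Cyc5 0 0 (-1) (-1)),
     (Cyc5 1 1 1 0, Cyc5 0 0 (-1) (-1)), (Cyc5 (-1) (-1) 0 0, Cyc5 (-1) 0 1 0), (Cyc5 (-1) (-1) (-1) 0, Cyc5 (-1) 0 0 1),
     (Cyc5 0 (-1) (-1) 0, Cyc5 0 (-1) 0 1), (Cyc5 0 (-1) (-1) (-1), Cyc5 (-1) (-2) (-1) (-1)), (Cyc5 0 0 (-1) (-1), Cyc5 (-1) (-1) (-2) (-1)),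
     (Cyc5 1 1 0 0, Cyc5 1 0 (-1) 0), (Cyc5 1 1 1 0, Cyc5 1 0 0 (-1)), (Cyc5 0 1 1 0, Cyc5 0 1 0 (-1))]"

lemma cyc5_orbit_closed:
  "list_all (\<lambda>v. list_all (\<lambda>k. cyc5_step k v \<in> set cyc5_orbit) [0..<5]) cyc5_orbit"
  by code_simp

lemma cyc5_orbit_jones:
  "list_all (\<lambda>v. cyc5_jones v \<in> set (0 # jones_values) \<and>
      (cyc5_jones v = 0 \<longleftrightarrow> jones_vanishing_residues (map_prod cyc5_aug cyc5_aug v))) cyc5_orbit"
  by code_simp

lemma jones_witnesses_correct:
  "list_all ncf_admissible jones_witnesses \<and>
   map (\<lambda>cs. cyc5_jones (cyc5_col cs)) jones_witnesses = 0 # jones_values"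
  by code_simp

lemma cyc5_step_mod_5: "cyc5_step (k mod 5) = cyc5_step k"
  by (simp add: fun_eq_iff cyc5_step_def cyc5_geom_def mod_add_left_eq)

lemma cyc5_col_in_orbit: "cyc5_col cs \<in> set cyc5_orbit"
proof (induction cs)
  case Nil
  show ?case
    by code_simp
next
  case (Cons c cs)
  then have "cyc5_step (nat c mod 5) (cyc5_col cs) \<in> set cyc5_orbit"
    using cyc5_orbit_closed by (simp add: list_all_iff)
  then show ?case
    by (simp add: cyc5_step_mod_5)
qed

lemma Jones_eq_cyc5_eval:
  assumes "cyclotomic5_root \<zeta>" and "x > 1"
  shows "Jones x \<zeta> = cyc5_eval \<zeta> (cyc5_jones (cyc5_col (ncf x)))"
proof -
  interpret cyclotomic5_root \<zeta>
    by (fact assms)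
  have "\<forall>c\<in>set (ncf x). c \<ge> 1"
    using ncf_correct(1)[OF assms(2)] by (auto simp: ncf_admissible_def)
  moreover have "\<zeta> \<noteq> 0"
    using power_5 by auto
  ultimately have "(calR x \<zeta>, calS x \<zeta>) = map_prod (cyc5_eval \<zeta>) (cyc5_eval \<zeta>) (cyc5_col (ncf x))"
    by (simp add: calR_def calS_def Mq_first_column cyc5_eval_col)
  then show ?thesis
    by (simp add: Jones_def cyc5_jones_def prod_eq_iff)
qed

lemma Jones_image:
  assumes "cyclotomic5_root \<zeta>"
  shows "{Jones x \<zeta> | x. x > 1} = cyc5_eval \<zeta> ` set (0 # jones_values)"
proof (intro equalityI subsetI)
  fix d
  assume "d \<in> {Jones x \<zeta> | x. x > 1}"
  then obtain x where "x > 1" and "d = Jones x \<zeta>"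
    by blast
  then show "d \<in> cyc5_eval \<zeta> ` set (0 # jones_values)"
    using Jones_eq_cyc5_eval[OF assms] cyc5_col_in_orbit[of "ncf x"] cyc5_orbit_jones
    by (auto simp: list_all_iff)
next
  fix d
  assume "d \<in> cyc5_eval \<zeta> ` set (0 # jones_values)"
  moreover have "set (0 # jones_values) = (\<lambda>cs. cyc5_jones (cyc5_col cs)) ` set jones_witnesses"
    using jones_witnesses_correct by (metis list.set_map)
  ultimately have "d \<in> (\<lambda>cs. cyc5_eval \<zeta> (cyc5_jones (cyc5_col cs))) ` set jones_witnesses"
    by (simp only: image_image)
  then obtain cs where "cs \<in> set jones_witnesses"
    and d: "d = cyc5_eval \<zeta> (cyc5_jones (cyc5_col cs))"
    by blast
  then have "ncf_admissible cs"
    using jones_witnesses_correct by (simp add: list_all_iff)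
  then have "d = Jones (ncf_val cs) \<zeta>" and "ncf_val cs > 1"
    using Jones_eq_cyc5_eval[OF assms] ncf_val_gt_1 by (simp_all add: d ncf_ncf_val)
  then show "d \<in> {Jones x \<zeta> | x. x > 1}"
    by blast
qed

lemma Jones_Fract_eq_0_iff:
  assumes "cyclotomic5_root (\<zeta> :: complex)" and "0 < s" "s < r" "coprime r s"
  shows "Jones (Fract r s) \<zeta> = 0 \<longleftrightarrow> jones_vanishing_residues (r, s)"
proof -
  define cs where "cs = ncf (Fract r s)"
  have "Fract r s > 1"
    using assms(2,3) by (simp add: Fract_of_int_quotient)
  then have J: "Jones (Fract r s) \<zeta> = cyc5_eval \<zeta> (cyc5_jones (cyc5_col cs))"
    and "ncf_admissible cs"
    using Jones_eq_cyc5_eval[OF assms(1)] ncf_correct(1) by (simp_all add: cs_def)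
  then have "\<forall>c\<in>set cs. c \<ge> 1"
    by (auto simp: ncf_admissible_def)
  then have "cyc5_aug (fst (cyc5_col cs)) mod 5 = r mod 5"
    and "cyc5_aug (snd (cyc5_col cs)) mod 5 = s mod 5"
    using cyc5_aug_col_mod_5 q_continuant_1_ncf_Fract[OF assms(2-4)] by (simp_all add: cs_def)
  then have "jones_vanishing_residues (map_prod cyc5_aug cyc5_aug (cyc5_col cs)) \<longleftrightarrow>
      jones_vanishing_residues (r, s)"
    by (simp add: jones_vanishing_residues_def)
  moreover have "cyc5_jones (cyc5_col cs) \<in> set (0 # jones_values)"
    and "cyc5_jones (cyc5_col cs) = 0 \<longleftrightarrow>
      jones_vanishing_residues (map_prod cyc5_aug cyc5_aug (cyc5_col cs))"
    using cyc5_col_in_orbit[of cs] cyc5_orbit_jones by (auto simp: list_all_iff)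
  ultimately show ?thesis
    using J zero_notin_cyc5_eval_jones_values[OF assms(1)] by force
qed

theorem corollary3p10:
  fixes \<zeta> :: complex
  assumes "\<zeta> ^ 5 = 1" and "\<forall>k::nat. 0 < k \<and> k < 5 \<longrightarrow> \<zeta> ^ k \<noteq> 1"
  shows "{Jones x \<zeta> | x. x > 1} =
           {0} \<union> {d. \<exists>c. (\<exists>j::nat. j < 5 \<and> (c = \<zeta> ^ j \<or> c = - (\<zeta> ^ j))) \<and>
                          (d = c \<or> d = (\<zeta> - 1) * c \<or> d = (\<zeta>\<^sup>2 + 1) * c)}
         \<and> (\<forall>r s :: int. s > 0 \<and> r > s \<and> coprime r s \<longrightarrow>
           (Jones (Fract r s) \<zeta> = 0 \<longleftrightarrow> 5 dvd r \<and> (s mod 5 = 2 \<or> s mod 5 = 3)))"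
proof -
  have root: "cyclotomic5_root \<zeta>"
    using assms by (intro cyclotomic5_rootI) auto
  then interpret cyclotomic5_root \<zeta> .
  have "{Jones x \<zeta> | x. x > 1} = insert 0 (cyc5_eval \<zeta> ` set jones_values)"
    using Jones_image[OF root] by simp
  then show ?thesis
    using cyc5_eval_jones_values Jones_Fract_eq_0_iff[OF root]
    by (simp add: jones_vanishing_residues_def dvd_eq_mod_eq_0)
qed

end
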